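(* For every $n\ge1$, every integer $r\ge 0$, every $\lambda\ge 0$, every $y\in\mathbb{R}^n$ and every $i\in[n]$, $$\max_{J\in\mathcal{I}:\, i\in J}\ \min_{I\in\mathcal{I}:\, i\in I,\ I\subseteq J}\Big[(P^{(|I|,r)}y_I)_i+\frac{\lambda C_{I,J}}{|I|}\Big]\ \le\ \min_{J\in\mathcal{I}:\, i\in J}\ \max_{I\in\mathcal{I}:\, i\in I,\ I\subseteq J}\Big[(P^{(|I|,r)}y_I)_i-\frac{\lambda C_{I,J}}{|I|}\Big].$$
   Context: $[n]=\{1,\dots,n\}$. An interval of $[n]$ is $[a:b]=\{a,\dots,b\}$ with $1\le a\le b\le n$; $\mathcal{I}$ is the set of all intervals of $[n]$. For $v\in\mathbb{R}^n$ and an interval $I$, $v_I\in\mathbb{R}^{|I|}$ is the restriction of $v$ to $I$. For an interval $I=[a:b]$ and integer $r\ge0$, let $S^{(I,r)}=\{(p(a/n),p((a+1)/n),\dots,p(b/n)) : p \text{ a real polynomial of degree at most } r\}\subseteq\mathbb{R}^{|I|}$; this subspace depends only on $|I|$, and $P^{(|I|,r)}$ denotes the orthogonal projection matrix onto it. For $i\in I$, $(P^{(|I|,r)}y_I)_i$ denotes the entry of the vector $P^{(|I|,r)}y_I$ at the position corresponding to $i$ (i.e. position $i-a+1$). For intervals $I\subseteq J$ with $J=[j_1:j_2]$: $C_{I,J}=1$ if $I$ contains neither $j_1$ nor $j_2$; $C_{I,J}=-1$ if $I=J$; $C_{I,J}=0$ otherwise. *)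

theory Defs
  imports "HOL-Computational_Algebra.Polynomial"
begin

text \<open>Intervals [a:b] of [n] are represented by pairs (a,b) with 1 <= a <= b <= n.
  Vectors in R^n are functions nat => real with indices 1..n; a vector in R^{|I|}
  for I = [a:b] is represented as a function indexed by a..b (zero outside).\<close>

definition intervals :: "nat \<Rightarrow> (nat \<times> nat) set" where
  "intervals n = {(a, b). 1 \<le> a \<and> a \<le> b \<and> b \<le> n}"

definition ivl :: "nat \<times> nat \<Rightarrow> nat set" where
  "ivl I = {fst I..snd I}"

definition ivl_len :: "nat \<times> nat \<Rightarrow> nat" where
  "ivl_len I = snd I + 1 - fst I"

definition poly_space :: "nat \<Rightarrow> nat \<Rightarrow> nat \<times> nat \<Rightarrow> (nat \<Rightarrow> real) set" where
  "poly_space n r I = {v. \<exists>p :: real poly. degree p \<le> r \<and>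
      (\<forall>k. v k = (if k \<in> ivl I then poly p (real k / real n) else 0))}"

definition proj :: "nat \<Rightarrow> nat \<Rightarrow> nat \<times> nat \<Rightarrow> (nat \<Rightarrow> real) \<Rightarrow> (nat \<Rightarrow> real)" where
  "proj n r I y = (THE v. v \<in> poly_space n r I \<and>
      (\<forall>w \<in> poly_space n r I. (\<Sum>k\<in>ivl I. (y k - v k) * w k) = 0))"

definition Ccoef :: "nat \<times> nat \<Rightarrow> nat \<times> nat \<Rightarrow> real" where
  "Ccoef I J = (if I = J then -1
     else if fst J \<notin> ivl I \<and> snd J \<notin> ivl I then 1 else 0)"

end

theory Submission
  imports Defs
begin

(* For two admissible intervals J1, J2 the interval
   I = J1 \<inter> J2 is admissible on both sides, and C(I,J1) + C(I,J2) \<le> 0: unless I equals J1 or J2,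
   it contains an endpoint of each. So the term for (J1, I) on the left is at most the term
   for (J2, I) on the right, and a max-min is bounded by a min-max as soon as any two rows
   share such a witness. *)

lemma Max_Min_le_Min_Max_common_witness:
  fixes f g :: "'i \<Rightarrow> 'j \<Rightarrow> 'a::linorder"
  assumes "finite A" "A \<noteq> {}" "\<And>J. J \<in> A \<Longrightarrow> finite (B J)"
    and "\<And>J1 J2. J1 \<in> A \<Longrightarrow> J2 \<in> A \<Longrightarrow> \<exists>I \<in> B J1 \<inter> B J2. f I J1 \<le> g I J2"
  shows "Max ((\<lambda>J. Min ((\<lambda>I. f I J) ` B J)) ` A) \<le> Min ((\<lambda>J. Max ((\<lambda>I. g I J) ` B J)) ` A)"
proof -
  have "Min ((\<lambda>I. f I J1) ` B J1) \<le> Max ((\<lambda>I. g I J2) ` B J2)"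
    if J: "J1 \<in> A" "J2 \<in> A" for J1 J2
  proof -
    obtain I where I: "I \<in> B J1" "I \<in> B J2" "f I J1 \<le> g I J2"
      using assms(4)[OF J] by blast
    have "Min ((\<lambda>I. f I J1) ` B J1) \<le> f I J1"
      using assms(3) J I by (intro Min_le) auto
    also have "\<dots> \<le> g I J2" by fact
    also have "\<dots> \<le> Max ((\<lambda>I. g I J2) ` B J2)"
      using assms(3) J I by (intro Max_ge) auto
    finally show ?thesis .
  qed
  then show ?thesis
    using assms(1,2) by (simp add: Max_le_iff Min_ge_iff)
qed

lemma finite_intervals: "finite (intervals n)"
proof -
  have "intervals n \<subseteq> {1..n} \<times> {1..n}" by (auto simp: intervals_def)
  then show ?thesis by (rule finite_subset) auto
qed

definition ivl_inter :: "nat \<times> nat \<Rightarrow> nat \<times> nat \<Rightarrow> nat \<times> nat" where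
  "ivl_inter J1 J2 = (max (fst J1) (fst J2), min (snd J1) (snd J2))"

lemma ivl_ivl_inter: "ivl (ivl_inter J1 J2) = ivl J1 \<inter> ivl J2"
  by (auto simp: ivl_def ivl_inter_def)

lemma ivl_inter_in_intervals:
  assumes "J1 \<in> intervals n" "J2 \<in> intervals n" "i \<in> ivl J1" "i \<in> ivl J2"
  shows "ivl_inter J1 J2 \<in> intervals n"
  using assms by (auto simp: intervals_def ivl_def ivl_inter_def)

lemma Ccoef_ivl_inter_add_nonpos:
  assumes "i \<in> ivl J1" "i \<in> ivl J2"
  shows "Ccoef (ivl_inter J1 J2) J1 + Ccoef (ivl_inter J1 J2) J2 \<le> 0"
  using assms by (auto simp: Ccoef_def ivl_def ivl_inter_def max_def min_def prod_eq_iff)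

theorem lemma1:
  fixes n r :: nat and lam :: real and y :: "nat \<Rightarrow> real" and i :: nat
  assumes "n \<ge> 1" and "lam \<ge> 0" and "i \<in> {1..n}"
  shows "Max ((\<lambda>J. Min ((\<lambda>I. proj n r I y i + lam * Ccoef I J / real (ivl_len I))
                 ` {I \<in> intervals n. i \<in> ivl I \<and> ivl I \<subseteq> ivl J}))
             ` {J \<in> intervals n. i \<in> ivl J})
         \<le> Min ((\<lambda>J. Max ((\<lambda>I. proj n r I y i - lam * Ccoef I J / real (ivl_len I))
                 ` {I \<in> intervals n. i \<in> ivl I \<and> ivl I \<subseteq> ivl J}))
             ` {J \<in> intervals n. i \<in> ivl J})"
proof (rule Max_Min_le_Min_Max_common_witness)
  show "{J \<in> intervals n. i \<in> ivl J} \<noteq> {}"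
    using assms(3) by (auto simp: intervals_def ivl_def)
  fix J1 J2
  assume J1: "J1 \<in> {J \<in> intervals n. i \<in> ivl J}" and J2: "J2 \<in> {J \<in> intervals n. i \<in> ivl J}"
  define I where "I = ivl_inter J1 J2"
  have I_mem: "I \<in> intervals n"
    using J1 J2 by (auto simp: I_def intro: ivl_inter_in_intervals)
  have "lam * (Ccoef I J1 + Ccoef I J2) / real (ivl_len I) \<le> 0"
    using assms(2) Ccoef_ivl_inter_add_nonpos[of i J1 J2] J1 J2
    by (simp add: I_def mult_nonneg_nonpos divide_nonpos_nonneg)
  then have "proj n r I y i + lam * Ccoef I J1 / real (ivl_len I)
      \<le> proj n r I y i - lam * Ccoef I J2 / real (ivl_len I)"
    by (simp add: distrib_left add_divide_distrib)
  moreover have "I \<in> {I \<in> intervals n. i \<in> ivl I \<and> ivl I \<subseteq> ivl J1}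
      \<inter> {I \<in> intervals n. i \<in> ivl I \<and> ivl I \<subseteq> ivl J2}"
    using I_mem J1 J2 by (auto simp: I_def ivl_ivl_inter)
  ultimately show "\<exists>I \<in> {I \<in> intervals n. i \<in> ivl I \<and> ivl I \<subseteq> ivl J1}
      \<inter> {I \<in> intervals n. i \<in> ivl I \<and> ivl I \<subseteq> ivl J2}.
      proj n r I y i + lam * Ccoef I J1 / real (ivl_len I)
      \<le> proj n r I y i - lam * Ccoef I J2 / real (ivl_len I)"
    by blast
qed (simp_all add: finite_intervals)

end
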